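(* For every integer $n\ge 0$, \[ (p_{1,5}+p_{4,5})(n) = M+\sum_{k=1}^\infty (-1)^{k+1}\big( (p_{1,5}+p_{4,5})(n-P_{7,k})+(p_{1,5}+p_{4,5})(n-Q_{7,k})\big), \] where $P_{7,k}=\frac{k(5k-3)}{2}$, $Q_{7,k}=\frac{k(5k+3)}{2}$, and \[ M = \begin{cases} (-1)^m, &\text{if } n=5P_{5,m}\text{ or }n=5Q_{5,m}\text{ for some }m\in\mathbb{N}_0, \\ 0, & \text{otherwise,} \end{cases} \] with $P_{5,m}=\frac{m(3m-1)}{2}$, $Q_{5,m}=\frac{m(3m+1)}{2}$.
   Context: $(p_{1,5}+p_{4,5})(n)$ denotes the number of partitions of $n$ in which every part is congruent to $1$ or to $4$ modulo $5$; it equals $1$ for $n=0$ and is set to $0$ for $n\notin\mathbb{N}_0$. $\mathbb{N}_0=\{0,1,2,\dots\}$. *)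

theory Defs
  imports Complex_Main "HOL-Library.Multiset"
begin

definition p15p45 :: "int \<Rightarrow> int" where
  "p15p45 n = (if n < 0 then 0 else
     int (card {M :: nat multiset. (\<forall>x\<in>#M. x mod 5 = 1 \<or> x mod 5 = 4) \<and> sum_mset M = nat n}))"

definition P7 :: "nat \<Rightarrow> int" where "P7 k = int k * (5 * int k - 3) div 2"
definition Q7 :: "nat \<Rightarrow> int" where "Q7 k = int k * (5 * int k + 3) div 2"
definition P5 :: "nat \<Rightarrow> int" where "P5 m = int m * (3 * int m - 1) div 2"
definition Q5 :: "nat \<Rightarrow> int" where "Q5 m = int m * (3 * int m + 1) div 2"

definition Mterm :: "int \<Rightarrow> int" where
  "Mterm n = (if \<exists>m::nat. n = 5 * P5 m \<or> n = 5 * Q5 m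
              then (-1) ^ (SOME m::nat. n = 5 * P5 m \<or> n = 5 * Q5 m) else 0)"

end

(*
  Write F(q) = sum_n p15p45(n) q^n = 1 / prod_i (1 - q^(5i+1)) (1 - q^(5i+4)). The Jacobi triple
  product with modulus 5,
    prod_i (1 - q^(5i+1)) (1 - q^(5i+4)) (1 - q^(5i+5)) = sum_j (-1)^j q^(j(5j-3)/2),
  and the one with modulus 3 taken at q^5 (Euler's pentagonal number theorem),
    prod_i (1 - q^(5i+5)) = sum_j (-1)^j q^(5 j(3j-1)/2),
  give F(q) * sum_j (-1)^j q^(j(5j-3)/2) = sum_j (-1)^j q^(5 j(3j-1)/2). For j = k and j = -k the
  exponents are P7 k, Q7 k on the left and 5 P5 k, 5 Q5 k on the right, so comparing the
  coefficients of q^n gives the recurrence.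

  Infinite products are avoided. The triple product is used in its finite form
    prod_(i<n) (1 - q^(a+bi)) (1 - q^(b(i+1)-a)) = sum_(|j|<=n) (-1)^j [2n, n+j]_(q^b) q^(b j(j-1)/2 + a j),
  which is the q-binomial theorem in disguise, and all power series are compared only up to
  degree n. There (q;q)_t agrees with (q;q)_n for t >= n, and [2n, n+j]_(q^b) (q^b;q^b)_n agrees
  with 1 whenever the j-th term has degree at most n, so the finite products behave like the
  infinite ones.
*)
theory Submission
  imports Defs "HOL-Computational_Algebra.Formal_Power_Series"
begin

unbundle fps_syntax

lemma member_le_sum_mset: "x \<in># M \<Longrightarrow> x \<le> sum_mset (M :: nat multiset)"
  by (induction M) auto

definition partition_count :: "nat set \<Rightarrow> nat \<Rightarrow> nat" where
  "partition_count A n = card {M. set_mset M \<subseteq> A \<and> sum_mset M = n}"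

definition partition_fps :: "nat set \<Rightarrow> 'a::comm_ring_1 fps" where
  "partition_fps A = Abs_fps (\<lambda>n. of_nat (partition_count A n))"

lemma finite_partitions:
  fixes A :: "nat set"
  assumes "finite A" "0 \<notin> A"
  shows "finite {M. set_mset M \<subseteq> A \<and> sum_mset M = n}"
proof (rule finite_subset)
  have pos: "0 < x" if "x \<in> A" for x
    using that assms(2) by (auto intro: gr0I)
  have "size M \<le> sum_mset M" if "set_mset M \<subseteq> A" for M
    using that by (induction M) (auto dest: pos)
  then show "{M. set_mset M \<subseteq> A \<and> sum_mset M = n} \<subseteq> (\<Union>s\<le>n. multisets_of_size A s)"
    by (auto simp: multisets_of_size_def)
  show "finite (\<Union>s\<le>n. multisets_of_size A s)"
    using assms by auto
qed

lemma partition_count_empty: "partition_count {} n = (if n = 0 then 1 else 0)"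
proof -
  have "{M. set_mset M \<subseteq> {} \<and> sum_mset M = n} = (if n = 0 then {{#}} else {})"
    by auto
  then show ?thesis
    by (simp add: partition_count_def)
qed

lemma partitions_containing:
  fixes B :: "nat set"
  assumes "p \<in> B"
  shows "{M. set_mset M \<subseteq> B \<and> sum_mset M = n \<and> p \<in># M} =
    (if p \<le> n then add_mset p ` {M. set_mset M \<subseteq> B \<and> sum_mset M = n - p} else {})"
proof (cases "p \<le> n")
  case True
  have "M \<in> add_mset p ` {M. set_mset M \<subseteq> B \<and> sum_mset M = n - p}"
    if "set_mset M \<subseteq> B" "sum_mset M = n" "p \<in># M" for M
  proof -
    have "set_mset (M - {#p#}) \<subseteq> B"
      using that(1) by (auto dest: in_diffD)
    moreover have "sum_mset (M - {#p#}) = n - p"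
      using that(2) sum_mset.remove[OF that(3)] by simp
    ultimately have "M - {#p#} \<in> {M. set_mset M \<subseteq> B \<and> sum_mset M = n - p}"
      by simp
    then show ?thesis
      using that(3) by (metis image_eqI insert_DiffM)
  qed
  with True assms show ?thesis
    by auto
next
  case False
  then show ?thesis
    by (auto dest!: multi_member_split)
qed

lemma partition_count_insert:
  assumes "finite A" "0 \<notin> A" "p \<notin> A" "p > 0"
  shows "partition_count (insert p A) n =
    partition_count A n + (if p \<le> n then partition_count (insert p A) (n - p) else 0)"
proof -
  define avoiding where "avoiding = {M. set_mset M \<subseteq> A \<and> sum_mset M = n}"
  define containing where
    "containing = {M. set_mset M \<subseteq> insert p A \<and> sum_mset M = n \<and> p \<in># M}"
  have "finite avoiding"
    using finite_partitions assms by (simp add: avoiding_def)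
  moreover have "finite containing"
    by (rule rev_finite_subset[OF finite_partitions[of "insert p A" n]])
      (use assms in \<open>auto simp: containing_def\<close>)
  moreover have "{M. set_mset M \<subseteq> insert p A \<and> sum_mset M = n} = avoiding \<union> containing"
    "avoiding \<inter> containing = {}"
    using assms(3) by (auto simp: avoiding_def containing_def)
  ultimately have "partition_count (insert p A) n = card avoiding + card containing"
    by (simp add: partition_count_def card_Un_disjoint)
  moreover have "card avoiding = partition_count A n"
    by (simp add: partition_count_def avoiding_def)
  moreover have "card containing = (if p \<le> n then partition_count (insert p A) (n - p) else 0)"
    unfolding containing_def partitions_containing[OF insertI1]
    by (simp add: partition_count_def card_image inj_on_def)
  ultimately show ?thesis
    by simp
qed

lemma partition_fps_mult_prod:
  assumes "finite A" "0 \<notin> A"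
  shows "partition_fps A * (\<Prod>p\<in>A. 1 - fps_X ^ p) = 1"
  using assms
proof (induction A rule: finite_induct)
  case empty
  show ?case
    by (simp add: partition_fps_def partition_count_empty fps_eq_iff fps_one_nth)
next
  case (insert p A)
  then have "partition_fps (insert p A) * (1 - fps_X ^ p) = (partition_fps A :: 'a fps)"
    by (intro fps_ext) (simp add: partition_fps_def partition_count_insert
        fps_X_power_mult_right_nth right_diff_distrib)
  with insert show ?case
    by (simp add: mult.assoc [symmetric])
qed

lemma partition_fps_mult_X_power_nth:
  "(partition_fps A * fps_X ^ e) $ n = (if e \<le> n then of_nat (partition_count A (n - e)) else 0)"
  by (simp add: partition_fps_def fps_X_power_mult_right_nth)

lemma Suc_choose_two: "Suc k choose 2 = (k choose 2) + k"
  by (simp add: numeral_2_eq_2)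

lemma two_times_choose_two: "2 * int (k choose 2) = int k * (int k - 1)"
  by (induction k) (simp_all add: Suc_choose_two algebra_simps)

fun qbinomial :: "'a::comm_ring_1 \<Rightarrow> nat \<Rightarrow> nat \<Rightarrow> 'a" where
  "qbinomial Q 0 k = (if k = 0 then 1 else 0)"
| "qbinomial Q (Suc m) k =
     (if k = 0 then 1 else qbinomial Q m (k - 1) + Q ^ k * qbinomial Q m k)"

lemma qbinomial_eq_0: "m < k \<Longrightarrow> qbinomial Q m k = 0"
  by (induction m arbitrary: k) auto

lemma qbinomial_0_right [simp]: "qbinomial Q m 0 = 1"
  by (cases m) auto

theorem q_binomial_theorem:
  fixes Q y z :: "'a::comm_ring_1"
  shows "(\<Prod>i<m. z + y * Q ^ i) =
    (\<Sum>k\<le>m. qbinomial Q m k * Q ^ (k choose 2) * y ^ k * z ^ (m - k))"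
proof (induction m arbitrary: y)
  case 0
  then show ?case by (simp add: binomial_eq_0)
next
  case (Suc m)
  define t where "t k = qbinomial Q m k * Q ^ (k choose 2) * y ^ k * z ^ (m - k)" for k
  define g where "g k = qbinomial Q m k * Q ^ ((k choose 2) + k) * y ^ k * z ^ (Suc m - k)" for k
  have "(\<Prod>i<Suc m. z + y * Q ^ i) = (z + y) * (\<Prod>i<m. z + (y * Q) * Q ^ i)"
    by (subst prod.lessThan_Suc_shift) (simp add: mult.assoc)
  also have "\<dots> = (z + y) * (\<Sum>k\<le>m. Q ^ k * t k)"
    unfolding Suc.IH[of "y * Q"] t_def by (simp add: power_mult_distrib mult_ac)
  also have "\<dots> = (\<Sum>k\<le>m. z * (Q ^ k * t k)) + (\<Sum>k\<le>m. y * (Q ^ k * t k))"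
    by (simp add: distrib_right sum_distrib_left sum.distrib)
  also have "(\<Sum>k\<le>m. z * (Q ^ k * t k)) = (\<Sum>k\<le>Suc m. g k)"
  proof -
    have "(\<Sum>k\<le>m. z * (Q ^ k * t k)) = (\<Sum>k\<le>m. g k)"
      by (intro sum.cong refl) (simp add: t_def g_def power_add Suc_diff_le mult_ac)
    then show ?thesis
      by (simp add: g_def qbinomial_eq_0)
  qed
  also have "\<dots> = z ^ Suc m +
      (\<Sum>k\<le>m. Q ^ Suc k * qbinomial Q m (Suc k) * Q ^ (Suc k choose 2) * y ^ Suc k * z ^ (m - k))"
    by (subst sum.atMost_Suc_shift) (simp add: g_def binomial_eq_0 power_add mult_ac)
  also have "(\<Sum>k\<le>m. y * (Q ^ k * t k)) =
      (\<Sum>k\<le>m. qbinomial Q m k * Q ^ (Suc k choose 2) * y ^ Suc k * z ^ (m - k))"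
    by (intro sum.cong refl) (simp add: t_def Suc_choose_two power_add algebra_simps)
  moreover have "(\<Sum>k\<le>Suc m. qbinomial Q (Suc m) k * Q ^ (k choose 2) * y ^ k * z ^ (Suc m - k)) =
      z ^ Suc m + (\<Sum>k\<le>m. (qbinomial Q m k + Q ^ Suc k * qbinomial Q m (Suc k)) *
        Q ^ (Suc k choose 2) * y ^ Suc k * z ^ (m - k))"
    by (subst sum.atMost_Suc_shift) (simp add: binomial_eq_0)
  ultimately show ?case
    by (simp add: algebra_simps sum.distrib)
qed

definition qpoch :: "'a::comm_ring_1 \<Rightarrow> nat \<Rightarrow> 'a" where
  "qpoch Q t = (\<Prod>i<t. 1 - Q ^ Suc i)"

lemma qpoch_0 [simp]: "qpoch Q 0 = 1"
  by (simp add: qpoch_def)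

lemma qpoch_Suc: "qpoch Q (Suc t) = qpoch Q t * (1 - Q ^ Suc t)"
  by (simp add: qpoch_def)

lemma qbinomial_mult_qpoch:
  "k \<le> m \<Longrightarrow> qbinomial Q m k * qpoch Q k * qpoch Q (m - k) = qpoch Q m"
proof (induction m arbitrary: k)
  case 0
  then show ?case by simp
next
  case (Suc m)
  show ?case
  proof (cases k)
    case 0
    then show ?thesis by simp
  next
    case (Suc j)
    have "qbinomial Q m j * qpoch Q k * qpoch Q (Suc m - k) =
        (qbinomial Q m j * qpoch Q j * qpoch Q (m - j)) * (1 - Q ^ k)"
      using Suc by (simp add: qpoch_Suc mult_ac)
    then have first: "qbinomial Q m j * qpoch Q k * qpoch Q (Suc m - k) = qpoch Q m * (1 - Q ^ k)"
      using Suc.IH[of j] Suc.prems Suc by simp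
    have second: "Q ^ k * qbinomial Q m k * qpoch Q k * qpoch Q (Suc m - k) =
        Q ^ k * qpoch Q m * (1 - Q ^ (Suc m - k))"
    proof (cases "k \<le> m")
      case True
      then have "Suc m - k = Suc (m - k)" by simp
      then have "Q ^ k * qbinomial Q m k * qpoch Q k * qpoch Q (Suc m - k) =
          Q ^ k * (qbinomial Q m k * qpoch Q k * qpoch Q (m - k)) * (1 - Q ^ (Suc m - k))"
        by (simp add: qpoch_Suc mult_ac)
      then show ?thesis
        using Suc.IH[OF True] by simp
    next
      case False
      then show ?thesis
        using Suc.prems by (simp add: qbinomial_eq_0)
    qed
    obtain d where d: "Suc m = k + d"
      using Suc.prems le_Suc_ex by blast
    have "qbinomial Q (Suc m) k = qbinomial Q m j + Q ^ k * qbinomial Q m k"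
      using Suc by simp
    then have "qbinomial Q (Suc m) k * qpoch Q k * qpoch Q (Suc m - k) =
        qpoch Q m * (1 - Q ^ k) + Q ^ k * qpoch Q m * (1 - Q ^ (Suc m - k))"
      by (simp only: distrib_right first second)
    also have "\<dots> = qpoch Q m * (1 - Q ^ Suc m)"
      unfolding d by (simp add: algebra_simps power_add)
    finally show ?thesis
      by (simp add: qpoch_Suc)
  qed
qed

lemma qpoch_mod_3:
  fixes Q :: "'a::comm_ring_1"
  shows "(\<Prod>i<N. (1 - Q ^ (1 + 3 * i)) * (1 - Q ^ (3 * Suc i - 1))) * qpoch (Q ^ 3) N =
    qpoch Q (3 * N)"
proof (induction N)
  case (Suc N)
  have N3: "3 * Suc N = Suc (Suc (Suc (3 * N)))" "1 + 3 * N = Suc (3 * N)"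
    "3 * Suc N - 1 = Suc (Suc (3 * N))"
    by simp_all
  have "(\<Prod>i<Suc N. (1 - Q ^ (1 + 3 * i)) * (1 - Q ^ (3 * Suc i - 1))) * qpoch (Q ^ 3) (Suc N) =
      ((\<Prod>i<N. (1 - Q ^ (1 + 3 * i)) * (1 - Q ^ (3 * Suc i - 1))) * qpoch (Q ^ 3) N) *
      ((1 - Q ^ (1 + 3 * N)) * (1 - Q ^ (3 * Suc N - 1))) * (1 - (Q ^ 3) ^ Suc N)"
    by (simp only: prod.lessThan_Suc qpoch_Suc mult_ac)
  also have "\<dots> = qpoch Q (3 * Suc N)"
    unfolding Suc.IH power_mult[symmetric] N3 by (simp only: qpoch_Suc mult.assoc diff_Suc_1)
  finally show ?case .
qed simp

text \<open>The
  cast to \<open>nat\<close> loses nothing when \<open>a \<le> b\<close> (see \<open>theta_exp_double\<close>).\<close>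
definition theta_exp :: "nat \<Rightarrow> nat \<Rightarrow> int \<Rightarrow> nat" where
  "theta_exp b a j = nat (int b * (j * (j - 1)) div 2 + int a * j)"

lemma mult_pred_nonneg: "0 \<le> (j::int) * (j - 1)"
  by (simp add: zero_le_mult_iff) linarith

lemma theta_exp_expr_neg:
  assumes "j < 0"
  shows "int b * (j * (j - 1)) + 2 * int a * j = (-j) * (int b * (1 - j) - 2 * int a)"
    and "2 * (int b - int a) \<le> int b * (1 - j) - 2 * int a"
proof -
  show "int b * (j * (j - 1)) + 2 * int a * j = (-j) * (int b * (1 - j) - 2 * int a)"
    by (simp add: algebra_simps)
  have "int b * 2 \<le> int b * (1 - j)"
    using assms by (intro mult_left_mono) auto
  then show "2 * (int b - int a) \<le> int b * (1 - j) - 2 * int a"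
    by simp
qed

lemma theta_exp_double:
  assumes "a \<le> b"
  shows "2 * int (theta_exp b a j) = int b * (j * (j - 1)) + 2 * int a * j"
proof -
  have "0 \<le> int b * (j * (j - 1)) + 2 * int a * j"
  proof (cases "j < 0")
    case True
    have "0 \<le> (-j) * (int b * (1 - j) - 2 * int a)"
      using True assms theta_exp_expr_neg(2)[OF True, of b a] by (intro mult_nonneg_nonneg) auto
    with theta_exp_expr_neg(1)[OF True, of b a] show ?thesis
      by simp
  next
    case False
    with mult_pred_nonneg[of j] show ?thesis
      by simp
  qed
  moreover have "even (j * (j - 1))"
    by simp
  then obtain t where "j * (j - 1) = 2 * t"
    by (rule evenE)
  ultimately show ?thesis
    unfolding theta_exp_def by simp
qed

lemma abs_le_theta_exp:
  assumes "0 < a" "a < b"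
  shows "nat \<bar>j\<bar> \<le> theta_exp b a j"
proof -
  have "2 * \<bar>j\<bar> \<le> int b * (j * (j - 1)) + 2 * int a * j"
  proof (cases "j < 0")
    case True
    have "2 \<le> 2 * (int b - int a)"
      using assms(2) by simp
    also have "\<dots> \<le> int b * (1 - j) - 2 * int a"
      by (rule theta_exp_expr_neg(2)[OF True])
    finally have "2 \<le> int b * (1 - j) - 2 * int a" .
    then have "(-j) * 2 \<le> (-j) * (int b * (1 - j) - 2 * int a)"
      using True by (intro mult_left_mono) auto
    with theta_exp_expr_neg(1)[OF True, of b a] True show ?thesis
      by simp
  next
    case False
    then have "1 * j \<le> int a * j"
      using assms by (intro mult_right_mono) auto
    moreover have "0 \<le> int b * (j * (j - 1))"
      using mult_pred_nonneg[of j] by simp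
    ultimately show ?thesis
      using False by linarith
  qed
  then show ?thesis
    using theta_exp_double[of a b j] assms by linarith
qed

lemma inj_theta_exp:
  assumes "a \<le> b" "\<not> int b dvd 2 * int a"
  shows "inj (theta_exp b a)"
proof (rule injI)
  fix i j
  assume "theta_exp b a i = theta_exp b a j"
  then have "int b * (i * (i - 1)) + 2 * int a * i = int b * (j * (j - 1)) + 2 * int a * j"
    using theta_exp_double[OF assms(1)] by metis
  then have "(i - j) * (int b * (i + j - 1) + 2 * int a) = 0"
    by (simp add: algebra_simps)
  moreover have "int b * (i + j - 1) + 2 * int a \<noteq> 0"
  proof
    assume "int b * (i + j - 1) + 2 * int a = 0"
    then have "2 * int a = int b * (1 - i - j)"
      by (simp add: algebra_simps)
    with assms(2) show False
      by (metis dvd_triv_left)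
  qed
  ultimately show "i = j"
    by simp
qed

lemma theta_exp_shift:
  assumes "a \<le> b" "k \<le> 2 * n"
  shows "b * (k choose 2) + a * k + b * n * (2 * n - k) =
    a * n + b * (n choose 2) + b * n * n + theta_exp b a (int k - int n)"
proof -
  have "int (2 * n - k) = 2 * int n - int k"
    using assms(2) by simp
  then have "2 * int (b * (k choose 2) + a * k + b * n * (2 * n - k)) =
      int b * (2 * int (k choose 2)) + 2 * int a * int k + 2 * int b * int n * (2 * int n - int k)"
    by (simp only: of_nat_add of_nat_mult) (simp add: algebra_simps)
  also have "\<dots> = 2 * int a * int n + int b * (int n * (int n - 1)) + 2 * int b * int n * int n +
      (int b * ((int k - int n) * (int k - int n - 1)) + 2 * int a * (int k - int n))"
    unfolding two_times_choose_two by (simp add: algebra_simps)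
  also have "\<dots> = 2 * int (a * n + b * (n choose 2) + b * n * n + theta_exp b a (int k - int n))"
    unfolding of_nat_add of_nat_mult distrib_left theta_exp_double[OF assms(1)]
    by (simp add: two_times_choose_two algebra_simps)
  finally show ?thesis
    by (metis mult_cancel_left of_nat_eq_iff zero_neq_numeral)
qed

lemma prod_neg_power_arith:
  "(\<Prod>i<n. - (Y ^ (a + b * i))) = (-1) ^ n * (Y::'a::comm_ring_1) ^ (a * n + b * (n choose 2))"
  by (induction n) (simp_all add: binomial_eq_0 Suc_choose_two power_add algebra_simps)

lemma prod_theta_factors:
  fixes Y :: "'a::comm_ring_1"
  assumes "a \<le> b"
  shows "(\<Prod>i<2 * n. Y ^ (b * n) + (- (Y ^ a)) * (Y ^ b) ^ i) =
    (-1) ^ n * Y ^ (a * n + b * (n choose 2) + b * n * n) *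
    (\<Prod>i<n. (1 - Y ^ (a + b * i)) * (1 - Y ^ (b * Suc i - a)))"
proof -
  define g where "g i = Y ^ (b * n) + (- (Y ^ a)) * (Y ^ b) ^ i" for i
  define h where "h i = 1 - Y ^ (b * Suc i - a)" for i
  have low: "g i = - (Y ^ (a + b * i)) * h (n - Suc i)" if "i < n" for i
  proof -
    have "b * Suc i \<le> b * n"
      using that by (intro mult_le_mono2) simp
    then have "a + b * i + (b * Suc (n - Suc i) - a) = b * n"
      using that assms by (simp add: Suc_diff_Suc diff_mult_distrib2)
    then have "Y ^ (b * n) = Y ^ (a + b * i) * Y ^ (b * Suc (n - Suc i) - a)"
      by (simp flip: power_add)
    then show ?thesis
      unfolding g_def h_def by (simp add: algebra_simps power_add power_mult)
  qed
  have high: "g (n + i) = Y ^ (b * n) * (1 - Y ^ (a + b * i))" for i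
    unfolding g_def by (simp add: algebra_simps power_add power_mult)
  have "(\<Prod>i<m + k. g i) = (\<Prod>i<m. g i) * (\<Prod>i<k. g (m + i))" for m k
    by (induction k) (simp_all add: mult.assoc)
  then have "(\<Prod>i<2 * n. g i) = (\<Prod>i<n. g i) * (\<Prod>i<n. g (n + i))"
    by (simp add: mult_2)
  also have "(\<Prod>i<n. g i) = (\<Prod>i<n. - (Y ^ (a + b * i)) * h (n - Suc i))"
    by (simp add: low)
  also have "\<dots> = (\<Prod>i<n. - (Y ^ (a + b * i))) * (\<Prod>i<n. h i)"
    by (simp only: prod.distrib prod.nat_diff_reindex)
  also have "(\<Prod>i<n. g (n + i)) = (Y ^ (b * n)) ^ n * (\<Prod>i<n. 1 - Y ^ (a + b * i))"
    by (simp add: high prod.distrib)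
  finally show ?thesis
    unfolding g_def h_def prod_neg_power_arith
    by (simp add: prod.distrib power_add power_mult mult_ac)
qed

lemma neg_one_power_eq_shift:
  "(-1::'a::ring_1) ^ k = (-1) ^ n * (-1) ^ nat \<bar>int k - int n\<bar>"
proof (cases "n \<le> k")
  case True
  then have "k = n + nat \<bar>int k - int n\<bar>"
    by simp
  then show ?thesis
    by (metis power_add)
next
  case False
  define d where "d = nat \<bar>int k - int n\<bar>"
  have "n = k + d"
    using False by (simp add: d_def)
  then have "(-1) ^ n * (-1) ^ d = (-1::'a) ^ k * (-1) ^ (2 * d)"
    by (simp add: power_add mult_2 mult.assoc)
  then show ?thesis
    by (simp add: d_def)
qed

lemma q_binomial_theta_term:
  fixes Y :: "'a::comm_ring_1"
  assumes "a \<le> b" "k \<le> 2 * n"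
  shows "(Y ^ b) ^ (k choose 2) * (- (Y ^ a)) ^ k * (Y ^ (b * n)) ^ (2 * n - k) =
    (-1) ^ n * Y ^ (a * n + b * (n choose 2) + b * n * n) *
    ((-1) ^ nat \<bar>int k - int n\<bar> * Y ^ theta_exp b a (int k - int n))"
proof -
  have "(Y ^ b) ^ (k choose 2) * (- (Y ^ a)) ^ k * (Y ^ (b * n)) ^ (2 * n - k) =
      (-1) ^ k * Y ^ (b * (k choose 2) + a * k + b * n * (2 * n - k))"
    by (simp only: power_minus[of "Y ^ a"] power_add flip: power_mult) (simp only: mult_ac)
  also have "\<dots> = (-1) ^ k * Y ^ (a * n + b * (n choose 2) + b * n * n + theta_exp b a (int k - int n))"
    by (simp only: theta_exp_shift[OF assms])
  also have "\<dots> = ((-1) ^ n * (-1) ^ nat \<bar>int k - int n\<bar>) *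
      (Y ^ (a * n + b * (n choose 2) + b * n * n) * Y ^ theta_exp b a (int k - int n))"
    by (subst neg_one_power_eq_shift[of k n]) (simp only: power_add)
  finally show ?thesis
    by (simp only: mult_ac)
qed

theorem finite_jacobi_triple_product:
  fixes Y :: "'a::idom"
  assumes "Y \<noteq> 0" "a \<le> b"
  shows "(\<Prod>i<n. (1 - Y ^ (a + b * i)) * (1 - Y ^ (b * Suc i - a))) =
    (\<Sum>j\<in>{-int n..int n}.
       (-1) ^ nat \<bar>j\<bar> * qbinomial (Y ^ b) (2 * n) (nat (j + int n)) * Y ^ theta_exp b a j)"
proof -
  define c where "c = (-1) ^ n * Y ^ (a * n + b * (n choose 2) + b * n * n)"
  have "c * (\<Prod>i<n. (1 - Y ^ (a + b * i)) * (1 - Y ^ (b * Suc i - a))) =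
      (\<Prod>i<2 * n. Y ^ (b * n) + (- (Y ^ a)) * (Y ^ b) ^ i)"
    unfolding c_def by (rule prod_theta_factors[OF assms(2), symmetric])
  also have "\<dots> = (\<Sum>k\<le>2 * n. qbinomial (Y ^ b) (2 * n) k *
      (Y ^ b) ^ (k choose 2) * (- (Y ^ a)) ^ k * (Y ^ (b * n)) ^ (2 * n - k))"
    by (rule q_binomial_theorem)
  also have "\<dots> = c * (\<Sum>k\<le>2 * n. (-1) ^ nat \<bar>int k - int n\<bar> *
      qbinomial (Y ^ b) (2 * n) k * Y ^ theta_exp b a (int k - int n))"
    unfolding sum_distrib_left
  proof (intro sum.cong refl)
    fix k
    assume "k \<in> {..2 * n}"
    then have "(Y ^ b) ^ (k choose 2) * (- (Y ^ a)) ^ k * (Y ^ (b * n)) ^ (2 * n - k) =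
        c * ((-1) ^ nat \<bar>int k - int n\<bar> * Y ^ theta_exp b a (int k - int n))"
      unfolding c_def using assms(2) by (simp only: q_binomial_theta_term atMost_iff)
    then show "qbinomial (Y ^ b) (2 * n) k *
        (Y ^ b) ^ (k choose 2) * (- (Y ^ a)) ^ k * (Y ^ (b * n)) ^ (2 * n - k) =
      c * ((-1) ^ nat \<bar>int k - int n\<bar> *
        qbinomial (Y ^ b) (2 * n) k * Y ^ theta_exp b a (int k - int n))"
      by (simp only: mult.assoc) (simp only: mult_ac)
  qed
  also have "(\<Sum>k\<le>2 * n. (-1) ^ nat \<bar>int k - int n\<bar> *
      qbinomial (Y ^ b) (2 * n) k * Y ^ theta_exp b a (int k - int n)) =
    (\<Sum>j\<in>{-int n..int n}.
       (-1) ^ nat \<bar>j\<bar> * qbinomial (Y ^ b) (2 * n) (nat (j + int n)) * Y ^ theta_exp b a j)"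
    by (rule sum.reindex_bij_witness[where i = "\<lambda>j. nat (j + int n)" and j = "\<lambda>k. int k - int n"])
      auto
  finally show ?thesis
    using assms(1) by (simp add: c_def)
qed

definition fps_eq_upto :: "nat \<Rightarrow> 'a::zero fps \<Rightarrow> 'a fps \<Rightarrow> bool" where
  "fps_eq_upto D f g \<longleftrightarrow> (\<forall>i\<le>D. f $ i = g $ i)"

lemma fps_eq_upto_refl [simp]: "fps_eq_upto D f f"
  by (simp add: fps_eq_upto_def)

lemma fps_eq_upto_sym: "fps_eq_upto D f g \<Longrightarrow> fps_eq_upto D g f"
  by (simp add: fps_eq_upto_def)

lemma fps_eq_upto_trans [trans]: "fps_eq_upto D f g \<Longrightarrow> fps_eq_upto D g h \<Longrightarrow> fps_eq_upto D f h"
  by (simp add: fps_eq_upto_def)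

lemma fps_eq_upto_mult:
  fixes f :: "'a::comm_ring_1 fps"
  shows "fps_eq_upto D f f' \<Longrightarrow> fps_eq_upto D g g' \<Longrightarrow> fps_eq_upto D (f * g) (f' * g')"
  unfolding fps_eq_upto_def fps_mult_nth by (auto intro!: sum.cong)

lemma fps_eq_upto_sum:
  fixes f :: "'b \<Rightarrow> 'a::comm_monoid_add fps"
  shows "(\<And>x. x \<in> A \<Longrightarrow> fps_eq_upto D (f x) (g x)) \<Longrightarrow> fps_eq_upto D (sum f A) (sum g A)"
  by (induction A rule: infinite_finite_induct) (simp_all add: fps_eq_upto_def)

lemma fps_eq_upto_X_power_mult: "D < e \<Longrightarrow> fps_eq_upto D (fps_X ^ e * f) 0"
  by (simp add: fps_eq_upto_def fps_X_power_mult_nth)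

lemma fps_eq_upto_cancel:
  fixes f g h :: "'a::field fps"
  assumes "h $ 0 \<noteq> 0" "fps_eq_upto D (f * h) (g * h)"
  shows "fps_eq_upto D f g"
proof -
  have "fps_eq_upto D (f * h * inverse h) (g * h * inverse h)"
    using assms(2) by (rule fps_eq_upto_mult) simp
  with assms(1) show ?thesis
    by (simp add: mult.assoc inverse_mult_eq_1')
qed

lemma qpoch_X_power_nth_0: "1 \<le> c \<Longrightarrow> qpoch (fps_X ^ c :: 'a::comm_ring_1 fps) t $ 0 = 1"
  by (induction t) (simp_all add: qpoch_Suc)

lemma fps_eq_upto_qpoch:
  fixes c :: nat
  assumes "1 \<le> c" "D \<le> t"
  shows "fps_eq_upto D (qpoch (fps_X ^ c :: 'a::comm_ring_1 fps) t) (qpoch (fps_X ^ c) D)"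
  using assms(2)
proof (induction t rule: dec_induct)
  case (step t)
  have "D < c * Suc t"
    using assms(1) step.hyps by (metis le_imp_less_Suc mult_1 mult_le_mono1 order_less_le_trans)
  then have "fps_eq_upto D (1 - fps_X ^ (c * Suc t)) (1 :: 'a fps)"
    by (simp add: fps_eq_upto_def)
  then have "fps_eq_upto D (1 - (fps_X ^ c) ^ Suc t) (1 :: 'a fps)"
    by (simp only: power_mult)
  with step.IH show ?case
    using fps_eq_upto_mult by (fastforce simp: qpoch_Suc)
qed simp

text \<open>Up to degree \<open>D\<close> all three q-Pochhammer symbols in \<open>qbinomial_mult_qpoch\<close> equal
  \<open>(Q; Q)\<^sub>D\<close>, which has constant term 1 and can be cancelled.\<close>
lemma fps_eq_upto_qbinomial_mult_qpoch:
  fixes c :: nat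
  assumes "1 \<le> c" "k \<le> m" "D \<le> k" "D \<le> m - k" "D \<le> t"
  shows "fps_eq_upto D (qbinomial (fps_X ^ c) m k * qpoch (fps_X ^ c) t) (1 :: 'a::field fps)"
proof -
  define q where "q = (qbinomial (fps_X ^ c) m k :: 'a fps)"
  define P where "P = (qpoch (fps_X ^ c) D :: 'a fps)"
  have P: "fps_eq_upto D (qpoch (fps_X ^ c) s) P" if "D \<le> s" for s
    unfolding P_def using assms(1) that by (rule fps_eq_upto_qpoch)
  have "P $ 0 \<noteq> 0"
    by (simp add: P_def qpoch_X_power_nth_0[OF assms(1)])
  have "fps_eq_upto D (q * P * P) (q * qpoch (fps_X ^ c) k * qpoch (fps_X ^ c) (m - k))"
    using assms by (intro fps_eq_upto_mult fps_eq_upto_refl fps_eq_upto_sym[OF P])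
  also have "\<dots> = qpoch (fps_X ^ c) m"
    unfolding q_def using assms(2) by (rule qbinomial_mult_qpoch)
  also have "fps_eq_upto D \<dots> (1 * P)"
    using assms by (simp add: P)
  finally have "fps_eq_upto D (q * P) 1"
    by (rule fps_eq_upto_cancel[OF \<open>P $ 0 \<noteq> 0\<close>])
  have "fps_eq_upto D (q * qpoch (fps_X ^ c) t) (q * P)"
    by (rule fps_eq_upto_mult[OF fps_eq_upto_refl P[OF assms(5)]])
  also note \<open>fps_eq_upto D (q * P) 1\<close>
  finally show ?thesis
    unfolding q_def .
qed

definition theta_partial :: "nat \<Rightarrow> nat \<Rightarrow> 'a::comm_ring_1 \<Rightarrow> nat \<Rightarrow> 'a" where
  "theta_partial b a Y n = (\<Sum>j\<in>{-int n..int n}. (-1) ^ nat \<bar>j\<bar> * Y ^ theta_exp b a j)"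

lemma fps_eq_upto_theta_term:
  fixes a b s n D :: nat
  defines "Y \<equiv> fps_X ^ s :: 'a::field fps"
  assumes "0 < a" "a < b" "1 \<le> s" "2 * D \<le> n" "\<bar>j\<bar> \<le> int n"
  shows "fps_eq_upto D
    (Y ^ theta_exp b a j * (qbinomial (Y ^ b) (2 * n) (nat (j + int n)) * qpoch (Y ^ b) n))
    (Y ^ theta_exp b a j)"
proof (cases "D < s * theta_exp b a j")
  case True
  have "Y ^ theta_exp b a j = fps_X ^ (s * theta_exp b a j) * 1"
    by (simp add: Y_def power_mult)
  then show ?thesis
    by (simp only: mult.assoc) (rule fps_eq_upto_trans[OF _ fps_eq_upto_sym];
        rule fps_eq_upto_X_power_mult[OF True])
next
  case False
  have "theta_exp b a j \<le> s * theta_exp b a j"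
    using assms(4) by simp
  then have "nat \<bar>j\<bar> \<le> D"
    using abs_le_theta_exp[OF assms(2,3), of j] False by linarith
  moreover have "1 \<le> s * b"
    using assms by simp
  ultimately have "fps_eq_upto D (qbinomial (fps_X ^ (s * b)) (2 * n) (nat (j + int n)) *
      qpoch (fps_X ^ (s * b)) n) (1 :: 'a fps)"
    using assms(5,6) by (intro fps_eq_upto_qbinomial_mult_qpoch) auto
  moreover have "Y ^ b = fps_X ^ (s * b)"
    by (simp add: Y_def power_mult)
  ultimately have "fps_eq_upto D (Y ^ theta_exp b a j *
      (qbinomial (Y ^ b) (2 * n) (nat (j + int n)) * qpoch (Y ^ b) n)) (Y ^ theta_exp b a j * 1)"
    by (simp only:) (rule fps_eq_upto_mult[OF fps_eq_upto_refl])
  then show ?thesis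
    by simp
qed

theorem jacobi_triple_product_upto:
  fixes a b s n D :: nat
  defines "Y \<equiv> fps_X ^ s :: 'a::field fps"
  assumes "0 < a" "a < b" "1 \<le> s" "2 * D \<le> n"
  shows "fps_eq_upto D
    ((\<Prod>i<n. (1 - Y ^ (a + b * i)) * (1 - Y ^ (b * Suc i - a))) * qpoch (Y ^ b) n)
    (theta_partial b a Y n)"
proof -
  have "Y \<noteq> 0"
    by (simp add: Y_def)
  have expand: "(\<Prod>i<n. (1 - Y ^ (a + b * i)) * (1 - Y ^ (b * Suc i - a))) *
      qpoch (Y ^ b) n = (\<Sum>j\<in>{-int n..int n}. (-1) ^ nat \<bar>j\<bar> *
        (Y ^ theta_exp b a j * (qbinomial (Y ^ b) (2 * n) (nat (j + int n)) * qpoch (Y ^ b) n)))"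
    unfolding finite_jacobi_triple_product[OF \<open>Y \<noteq> 0\<close> less_imp_le[OF assms(3)]] sum_distrib_right
    by (simp only: mult_ac)
  show ?thesis
    unfolding expand theta_partial_def
  proof (intro fps_eq_upto_sum fps_eq_upto_mult[OF fps_eq_upto_refl])
    fix j
    assume "j \<in> {-int n..int n}"
    with assms show "fps_eq_upto D
        (Y ^ theta_exp b a j * (qbinomial (Y ^ b) (2 * n) (nat (j + int n)) * qpoch (Y ^ b) n))
        (Y ^ theta_exp b a j)"
      unfolding Y_def by (intro fps_eq_upto_theta_term) auto
  qed
qed

lemma sum_int_symmetric:
  "(\<Sum>j\<in>{-int N..int N}. f j) = f 0 + (\<Sum>k=1..N. f (int k) + f (- int k))"
proof (induction N)
  case (Suc N)
  have "{-int (Suc N)..int (Suc N)} = insert (int (Suc N)) (insert (- int (Suc N)) {-int N..int N})"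
    by auto
  with Suc show ?case
    by (simp add: algebra_simps)
qed simp

lemma neg_one_power_mult_fps_nth: "((-1) ^ k * f) $ n = (-1) ^ k * (f $ n :: 'a::comm_ring_1)"
  by (simp add: minus_one_power_iff)

lemma mult_theta_partial_nth:
  "(f * theta_partial b a (fps_X ^ s) N) $ n =
    (\<Sum>j\<in>{-int N..int N}. (-1) ^ nat \<bar>j\<bar> * (f * fps_X ^ (s * theta_exp b a j)) $ n)"
  unfolding theta_partial_def sum_distrib_left fps_sum_nth
  by (simp add: mult.left_commute[of f] neg_one_power_mult_fps_nth flip: power_mult)

definition parts_1_4_mod_5 :: "nat \<Rightarrow> nat set" where
  "parts_1_4_mod_5 N = (\<lambda>i. 5 * i + 1) ` {..<N} \<union> (\<lambda>i. 5 * i + 4) ` {..<N}"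

lemma finite_parts_1_4_mod_5: "finite (parts_1_4_mod_5 N)"
  by (simp add: parts_1_4_mod_5_def)

lemma zero_notin_parts_1_4_mod_5: "0 \<notin> parts_1_4_mod_5 N"
  by (auto simp: parts_1_4_mod_5_def)

lemma prod_parts_1_4_mod_5:
  "(\<Prod>p\<in>parts_1_4_mod_5 N. 1 - fps_X ^ p :: 'a::comm_ring_1 fps) =
    (\<Prod>i<N. (1 - fps_X ^ (1 + 5 * i)) * (1 - fps_X ^ (5 * Suc i - 1)))"
proof -
  have "(\<lambda>i. 5 * i + 1) ` {..<N} \<inter> (\<lambda>i. 5 * i + 4) ` {..<N} = {}"
    by auto presburger
  moreover have "inj_on (\<lambda>i. 5 * i + 1) A" "inj_on (\<lambda>i. 5 * i + 4) A" for A :: "nat set"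
    by (simp_all add: inj_on_def)
  ultimately show ?thesis
    by (simp add: parts_1_4_mod_5_def prod.union_disjoint prod.reindex prod.distrib add.commute)
qed

lemma mem_parts_1_4_mod_5_iff:
  "x \<in> parts_1_4_mod_5 N \<longleftrightarrow> (x mod 5 = 1 \<or> x mod 5 = 4) \<and> x div 5 < N"
proof
  assume "x \<in> parts_1_4_mod_5 N"
  then obtain i where "i < N" "x = 5 * i + 1 \<or> x = 5 * i + 4"
    unfolding parts_1_4_mod_5_def by blast
  then show "(x mod 5 = 1 \<or> x mod 5 = 4) \<and> x div 5 < N"
    by auto
next
  assume x: "(x mod 5 = 1 \<or> x mod 5 = 4) \<and> x div 5 < N"
  then have "x = 5 * (x div 5) + 1 \<or> x = 5 * (x div 5) + 4"
    by (metis mult_div_mod_eq)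
  with x show "x \<in> parts_1_4_mod_5 N"
    unfolding parts_1_4_mod_5_def by (elim disjE) (blast intro: rev_image_eqI)+
qed

lemma partition_count_parts_1_4_mod_5:
  assumes "m < N"
  shows "int (partition_count (parts_1_4_mod_5 N) m) = p15p45 (int m)"
proof -
  have "set_mset M \<subseteq> parts_1_4_mod_5 N \<longleftrightarrow> (\<forall>x\<in>#M. x mod 5 = 1 \<or> x mod 5 = 4)"
    if "sum_mset M = m" for M
  proof -
    have "x div 5 < N" if "x \<in># M" for x
      using member_le_sum_mset[OF that] \<open>sum_mset M = m\<close> assms div_le_dividend[of x 5]
      by linarith
    then show ?thesis
      unfolding subset_iff mem_parts_1_4_mod_5_iff by blast
  qed
  then have "{M. set_mset M \<subseteq> parts_1_4_mod_5 N \<and> sum_mset M = m} =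
      {M. (\<forall>x\<in>#M. x mod 5 = 1 \<or> x mod 5 = 4) \<and> sum_mset M = m}"
    by (intro Collect_cong) blast
  then show ?thesis
    by (simp add: partition_count_def p15p45_def)
qed

lemma p15p45_neg: "m < 0 \<Longrightarrow> p15p45 m = 0"
  by (simp add: p15p45_def)

lemma partition_fps_parts_1_4_mod_5_mult_X_power_nth:
  assumes "n < N"
  shows "(partition_fps (parts_1_4_mod_5 N) * fps_X ^ e :: 'a::comm_ring_1 fps) $ n =
    of_int (p15p45 (int n - int e))"
proof (cases "e \<le> n")
  case True
  have "(partition_fps (parts_1_4_mod_5 N) * fps_X ^ e :: 'a fps) $ n =
      of_int (int (partition_count (parts_1_4_mod_5 N) (n - e)))"
    using True by (simp add: partition_fps_mult_X_power_nth)
  also have "int (partition_count (parts_1_4_mod_5 N) (n - e)) = p15p45 (int (n - e))"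
    using assms by (intro partition_count_parts_1_4_mod_5) simp
  finally show ?thesis
    using True by (simp add: of_nat_diff)
next
  case False
  then show ?thesis
    by (simp add: partition_fps_mult_X_power_nth p15p45_def)
qed

lemma theta_exp_5_1_nonneg: "int (theta_exp 5 1 (int k)) = P7 k"
  using theta_exp_double[of 1 5 "int k"] unfolding P7_def by (simp add: algebra_simps)

lemma theta_exp_5_1_neg: "int (theta_exp 5 1 (- int k)) = Q7 k"
  using theta_exp_double[of 1 5 "- int k"] unfolding Q7_def by (simp add: algebra_simps)

lemma int_le_P7: "int k \<le> P7 k"
  using abs_le_theta_exp[of 1 5 "int k"] theta_exp_5_1_nonneg[of k] by simp

lemma int_le_Q7: "int k \<le> Q7 k"
  using abs_le_theta_exp[of 1 5 "- int k"] theta_exp_5_1_neg[of k] by simp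

lemma theta_exp_3_1_nonneg: "int (theta_exp 3 1 (int k)) = P5 k"
  using theta_exp_double[of 1 3 "int k"] unfolding P5_def by (simp add: algebra_simps)

lemma theta_exp_3_1_neg: "int (theta_exp 3 1 (- int k)) = Q5 k"
  using theta_exp_double[of 1 3 "- int k"] unfolding Q5_def by (simp add: algebra_simps)

lemma inj_theta_exp_3_1: "inj (theta_exp 3 1)"
  by (rule inj_theta_exp) simp_all

lemma partition_fps_mult_theta_partial_5_1_nth:
  assumes "n < N"
  shows "(partition_fps (parts_1_4_mod_5 N) * theta_partial 5 1 fps_X N :: 'a::comm_ring_1 fps) $ n =
    of_int (p15p45 (int n)) +
    (\<Sum>k=1..N. (-1) ^ k * of_int (p15p45 (int n - P7 k) + p15p45 (int n - Q7 k)))"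
proof -
  define F where "F = (partition_fps (parts_1_4_mod_5 N) :: 'a fps)"
  define g where "g j = (-1) ^ nat \<bar>j\<bar> * (of_int (p15p45 (int n - int (theta_exp 5 1 j))) :: 'a)"
    for j
  have "(F * theta_partial 5 1 fps_X N) $ n =
      (\<Sum>j\<in>{-int N..int N}. (-1) ^ nat \<bar>j\<bar> * (F * fps_X ^ (1 * theta_exp 5 1 j)) $ n)"
    using mult_theta_partial_nth[of F 5 1 1 N n] by (simp only: power_one_right)
  also have "\<dots> = (\<Sum>j\<in>{-int N..int N}. g j)"
    unfolding g_def F_def mult_1 partition_fps_parts_1_4_mod_5_mult_X_power_nth[OF assms] ..
  also have "\<dots> = g 0 + (\<Sum>k=1..N. g (int k) + g (- int k))"
    by (rule sum_int_symmetric)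
  also have "\<dots> = of_int (p15p45 (int n)) +
      (\<Sum>k=1..N. (-1) ^ k * of_int (p15p45 (int n - P7 k) + p15p45 (int n - Q7 k)))"
    unfolding g_def theta_exp_5_1_nonneg theta_exp_5_1_neg
    by (simp add: theta_exp_def distrib_left)
  finally show ?thesis
    unfolding F_def .
qed

lemma pentagonal_iff_theta_exp_3_1:
  "(int n = 5 * P5 m \<or> int n = 5 * Q5 m) \<longleftrightarrow>
    (n = 5 * theta_exp 3 1 (int m) \<or> n = 5 * theta_exp 3 1 (- int m))"
  using theta_exp_3_1_nonneg[of m] theta_exp_3_1_neg[of m] by linarith

text \<open>\<open>Mterm\<close> chooses its exponent with \<open>SOME\<close>; injectivity of \<open>theta_exp 3 1\<close> makes
  the choice unique.\<close>
lemma Mterm_5_theta_exp_3_1: "Mterm (int (5 * theta_exp 3 1 j)) = (-1) ^ nat \<bar>j\<bar>"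
proof -
  define n where "n = 5 * theta_exp 3 1 j"
  define pent where "pent m \<longleftrightarrow> int n = 5 * P5 m \<or> int n = 5 * Q5 m" for m
  have "pent (nat \<bar>j\<bar>)"
    unfolding pent_def pentagonal_iff_theta_exp_3_1 n_def by (cases "0 \<le> j") simp_all
  then have "pent (SOME m. pent m)"
    by (rule someI)
  then have "j = int (SOME m. pent m) \<or> j = - int (SOME m. pent m)"
    unfolding pent_def pentagonal_iff_theta_exp_3_1 n_def
    using inj_theta_exp_3_1 by (auto dest: injD)
  then have "nat \<bar>j\<bar> = (SOME m. pent m)"
    by auto
  moreover have "Mterm (int n) = (-1) ^ (SOME m. pent m)"
    using \<open>pent (nat \<bar>j\<bar>)\<close> unfolding Mterm_def pent_def by auto
  ultimately show ?thesis
    by (simp add: n_def)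
qed

lemma Mterm_eq_0:
  assumes "\<And>j. n \<noteq> 5 * theta_exp 3 1 j"
  shows "Mterm (int n) = 0"
  using assms unfolding Mterm_def pentagonal_iff_theta_exp_3_1 by auto

lemma theta_partial_3_1_X_power_5_nth:
  assumes "n \<le> N"
  shows "(theta_partial 3 1 (fps_X ^ 5) N :: 'a::comm_ring_1 fps) $ n = of_int (Mterm (int n))"
proof -
  have coeff: "(theta_partial 3 1 (fps_X ^ 5) N :: 'a fps) $ n =
      (\<Sum>j\<in>{-int N..int N}. (-1) ^ nat \<bar>j\<bar> * (if n = 5 * theta_exp 3 1 j then 1 else 0))"
    using mult_theta_partial_nth[of "1 :: 'a fps" 3 1 5 N n] by simp
  show ?thesis
  proof (cases "\<exists>j. n = 5 * theta_exp 3 1 j")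
    case True
    then obtain j0 where j0: "n = 5 * theta_exp 3 1 j0"
      by blast
    have "n = 5 * theta_exp 3 1 j \<longleftrightarrow> j = j0" for j
      using j0 inj_theta_exp_3_1 by (auto dest: injD)
    then have "(theta_partial 3 1 (fps_X ^ 5) N :: 'a fps) $ n =
        (\<Sum>j\<in>{-int N..int N}. if j = j0 then (-1) ^ nat \<bar>j0\<bar> else 0)"
      unfolding coeff by (intro sum.cong) auto
    also have "\<dots> = (-1) ^ nat \<bar>j0\<bar>"
    proof -
      have "nat \<bar>j0\<bar> \<le> N"
        using abs_le_theta_exp[of 1 3 j0] j0 assms by simp
      then have "j0 \<in> {-int N..int N}"
        by auto
      then show ?thesis
        by simp
    qed
    also have "\<dots> = of_int (Mterm (int n))"
      unfolding j0 Mterm_5_theta_exp_3_1 by simp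
    finally show ?thesis .
  next
    case False
    then show ?thesis
      unfolding coeff by (simp add: Mterm_eq_0)
  qed
qed

lemma partition_fps_mult_theta_partial_5_1_eq_upto:
  assumes "2 * D \<le> N"
  shows "fps_eq_upto D (partition_fps (parts_1_4_mod_5 N) * theta_partial 5 1 fps_X N)
    (theta_partial 3 1 (fps_X ^ 5) N :: 'a::field fps)"
proof -
  define F where "F = (partition_fps (parts_1_4_mod_5 N) :: 'a fps)"
  define E5 where "E5 = (\<Prod>i<N. (1 - fps_X ^ (1 + 5 * i)) * (1 - fps_X ^ (5 * Suc i - 1)) :: 'a fps)"
  define E3 where "E3 = (\<Prod>i<N. (1 - (fps_X ^ 5) ^ (1 + 3 * i)) * (1 - (fps_X ^ 5) ^ (3 * Suc i - 1)) :: 'a fps)"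
  have "F * E5 = 1"
    using partition_fps_mult_prod[OF finite_parts_1_4_mod_5 zero_notin_parts_1_4_mod_5]
    unfolding F_def E5_def prod_parts_1_4_mod_5 .
  have "fps_eq_upto D (E5 * qpoch (fps_X ^ 5) N) (theta_partial 5 1 fps_X N)"
    using jacobi_triple_product_upto[of 1 5 1 D N, where 'a = 'a] assms
    unfolding E5_def by simp
  then have "fps_eq_upto D (F * theta_partial 5 1 fps_X N) (F * (E5 * qpoch (fps_X ^ 5) N))"
    by (rule fps_eq_upto_mult[OF fps_eq_upto_refl fps_eq_upto_sym])
  also have "F * (E5 * qpoch (fps_X ^ 5) N) = qpoch (fps_X ^ 5) N"
    by (simp add: \<open>F * E5 = 1\<close> flip: mult.assoc)
  also have "fps_eq_upto D \<dots> (qpoch (fps_X ^ 5) D)"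
    using assms by (intro fps_eq_upto_qpoch) auto
  also have "fps_eq_upto D \<dots> (qpoch (fps_X ^ 5) (3 * N))"
    using assms by (intro fps_eq_upto_sym[OF fps_eq_upto_qpoch]) auto
  also have "qpoch (fps_X ^ 5) (3 * N) = E3 * qpoch ((fps_X ^ 5) ^ 3) N"
    unfolding E3_def by (rule qpoch_mod_3[symmetric])
  also have "fps_eq_upto D \<dots> (theta_partial 3 1 (fps_X ^ 5) N)"
    unfolding E3_def using assms by (intro jacobi_triple_product_upto) auto
  finally show ?thesis
    unfolding F_def .
qed

lemma p15p45_pentagonal_sum:
  assumes "2 * n < N"
  shows "real_of_int (p15p45 (int n)) +
    (\<Sum>k=1..N. (-1) ^ k * real_of_int (p15p45 (int n - P7 k) + p15p45 (int n - Q7 k))) =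
    real_of_int (Mterm (int n))"
proof -
  have "fps_eq_upto n (partition_fps (parts_1_4_mod_5 N) * theta_partial 5 1 fps_X N)
      (theta_partial 3 1 (fps_X ^ 5) N :: real fps)"
    using assms by (intro partition_fps_mult_theta_partial_5_1_eq_upto) simp
  then have "(partition_fps (parts_1_4_mod_5 N) * theta_partial 5 1 fps_X N :: real fps) $ n =
      theta_partial 3 1 (fps_X ^ 5) N $ n"
    unfolding fps_eq_upto_def by blast
  moreover have "n < N" "n \<le> N"
    using assms by simp_all
  ultimately show ?thesis
    unfolding partition_fps_mult_theta_partial_5_1_nth[OF \<open>n < N\<close>]
      theta_partial_3_1_X_power_5_nth[OF \<open>n \<le> N\<close>]
    by simp
qed

theorem theorem2p3:
  fixes n :: nat
  shows "real_of_int (p15p45 (int n)) =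
    real_of_int (Mterm (int n)) +
    (\<Sum>k. (-1) ^ (Suc k + 1) *
       real_of_int (p15p45 (int n - P7 (Suc k)) + p15p45 (int n - Q7 (Suc k))))"
proof -
  define N where "N = 2 * n + 1"
  define t where "t k = real_of_int (p15p45 (int n - P7 k) + p15p45 (int n - Q7 k))" for k
  have "t k = 0" if "n < k" for k
    using that int_le_P7[of k] int_le_Q7[of k] by (simp add: t_def p15p45_neg)
  then have "(\<Sum>k. (-1) ^ (Suc k + 1) * t (Suc k)) = (\<Sum>k<N. (-1) ^ (Suc k + 1) * t (Suc k))"
    by (intro suminf_finite) (auto simp: N_def)
  also have "\<dots> = - (\<Sum>k<N. (-1) ^ Suc k * t (Suc k))"
    by (simp add: sum_negf)
  also have "(\<Sum>k<N. (-1) ^ Suc k * t (Suc k)) = (\<Sum>k=1..N. (-1) ^ k * t k)"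
    by (simp only: sum.atLeast1_atMost_eq One_nat_def)
  finally show ?thesis
    using p15p45_pentagonal_sum[of n N] by (simp add: t_def N_def)
qed

end
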